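(* Let $N_1,N_2\in\mathbb{N}$ and suppose $(|p_1\rangle,|q_1\rangle)\in\mathcal{S}_{N_1}$ and $(|p_2\rangle,|q_2\rangle)\in\mathcal{S}_{N_2}$ generate extremal rays. Then $(|p_1\rangle\otimes|p_2\rangle,|q_1\rangle\otimes|q_2\rangle)\in\mathcal{S}_{N_1+N_2}$ and it generates an extremal ray of $\mathcal{S}_{N_1+N_2}$.
   Context: $K=\frac12\begin{pmatrix}-1&1&1&1\\1&-1&1&1\\1&1&-1&1\\1&1&1&-1\end{pmatrix}$. For $N\in\mathbb{N}$, $\mathcal{S}_N=\{(|p\rangle,|q\rangle)\in(\mathbb{R}^4)^{\otimes N}\oplus(\mathbb{R}^4)^{\otimes N}: |p\rangle,|q\rangle\text{ entrywise nonnegative},\ K^{\otimes N}|p\rangle=|q\rangle\}$, a polyhedral cone (the cone of Pauli PPT spectra). *)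

theory Defs
  imports Complex_Main
begin

text \<open>Vectors in (R^4)^{\<otimes>N} are represented as functions on index strings
  (lists of length N over {0..3}), required to vanish off the index set.\<close>

definition idx :: "nat \<Rightarrow> nat list set" where
  "idx N = {xs. length xs = N \<and> set xs \<subseteq> {0..<4}}"

definition Kent :: "nat \<Rightarrow> nat \<Rightarrow> real" where
  "Kent i j = (if i = j then - 1/2 else 1/2)"

definition Kpow :: "nat \<Rightarrow> (nat list \<Rightarrow> real) \<Rightarrow> (nat list \<Rightarrow> real)" where
  "Kpow N p = (\<lambda>xs. if xs \<in> idx N
       then (\<Sum>ys\<in>idx N. (\<Prod>k<N. Kent (xs ! k) (ys ! k)) * p ys) else 0)"

definition is_vec :: "nat \<Rightarrow> (nat list \<Rightarrow> real) \<Rightarrow> bool" where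
  "is_vec N p \<longleftrightarrow> (\<forall>xs. xs \<notin> idx N \<longrightarrow> p xs = 0)"

definition S :: "nat \<Rightarrow> ((nat list \<Rightarrow> real) \<times> (nat list \<Rightarrow> real)) set" where
  "S N = {(p, q). is_vec N p \<and> is_vec N q \<and> (\<forall>xs. p xs \<ge> 0) \<and> (\<forall>xs. q xs \<ge> 0)
                  \<and> Kpow N p = q}"

definition tensor :: "nat \<Rightarrow> (nat list \<Rightarrow> real) \<Rightarrow> (nat list \<Rightarrow> real) \<Rightarrow> (nat list \<Rightarrow> real)" where
  "tensor N1 p1 p2 = (\<lambda>xs. p1 (take N1 xs) * p2 (drop N1 xs))"

definition extremal_ray ::
  "((nat list \<Rightarrow> real) \<times> (nat list \<Rightarrow> real)) set \<Rightarrow> (nat list \<Rightarrow> real) \<times> (nat list \<Rightarrow> real) \<Rightarrow> bool" where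
  "extremal_ray C x \<longleftrightarrow> x \<in> C \<and> x \<noteq> (\<lambda>_. 0, \<lambda>_. 0) \<and>
     (\<forall>y\<in>C. \<forall>z\<in>C.
        (fst x = (\<lambda>i. fst y i + fst z i) \<and> snd x = (\<lambda>i. snd y i + snd z i)) \<longrightarrow>
        (\<exists>a::real. a \<ge> 0 \<and> fst y = (\<lambda>i. a * fst x i) \<and> snd y = (\<lambda>i. a * snd x i)))"

end

theory Submission
  imports Defs
begin

text \<open>The linear span of the smallest face of \<open>S N\<close> containing \<open>(p, q)\<close> consists of the vectors
  \<open>x\<close> with \<open>supp x \<subseteq> supp p\<close> and \<open>supp (K\<^sup>\<otimes>\<^sup>N x) \<subseteq> supp q\<close>, since \<open>(p, q)\<close> can be perturbed
  by any small multiple of such an \<open>x\<close> without leaving the cone. Hence \<open>(p, q)\<close> spans an extremal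
  ray iff this space is the line through \<open>p\<close>. For a tensor product, take such an \<open>x\<close> and apply
  \<open>K\<^sup>\<otimes>\<^sup>N\<^sub>2\<close> to the second factor only: every slice with the second index fixed lies in the face
  span of \<open>(p\<^sub>1, q\<^sub>1)\<close>, hence is a multiple of \<open>p\<^sub>1\<close>; a slice of \<open>x\<close> with the first index fixed lies
  in the face span of \<open>(p\<^sub>2, q\<^sub>2)\<close>, which forces the coefficients to be proportional to \<open>q\<^sub>2\<close>.
  Since \<open>K\<close> is an involution, \<open>x\<close> is then a multiple of \<open>p\<^sub>1 \<otimes> p\<^sub>2\<close>.\<close>

subsection \<open>Index strings\<close>

lemma finite_idx: "finite (idx N)"
proof -
  have "idx N = {xs. set xs \<subseteq> {0..<4} \<and> length xs = N}" by (auto simp: idx_def)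
  then show ?thesis using finite_lists_length_eq[of "{0..<4::nat}" N] by simp
qed

lemma length_idx: "xs \<in> idx N \<Longrightarrow> length xs = N"
  by (simp add: idx_def)

lemma nth_idx_less: "xs \<in> idx N \<Longrightarrow> k < N \<Longrightarrow> xs ! k < 4"
  unfolding idx_def using nth_mem by fastforce

lemma append_in_idx: "a \<in> idx m \<Longrightarrow> b \<in> idx n \<Longrightarrow> a @ b \<in> idx (m + n)"
  by (auto simp: idx_def)

lemma take_in_idx: "xs \<in> idx (m + n) \<Longrightarrow> take m xs \<in> idx m"
  by (auto simp: idx_def dest: in_set_takeD)

lemma drop_in_idx: "xs \<in> idx (m + n) \<Longrightarrow> drop m xs \<in> idx n"
  by (auto simp: idx_def dest: in_set_dropD)

lemma idx_add_cases:
  assumes "xs \<in> idx (m + n)"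
  obtains a b where "a \<in> idx m" "b \<in> idx n" "xs = a @ b"
  using take_in_idx[OF assms] drop_in_idx[OF assms] append_take_drop_id by metis

lemma sum_idx_add:
  "(\<Sum>xs\<in>idx (m + n). f xs) = (\<Sum>a\<in>idx m. \<Sum>b\<in>idx n. f (a @ b))"
proof -
  have "bij_betw (\<lambda>(a, b). a @ b) (idx m \<times> idx n) (idx (m + n))"
  proof (rule bij_betwI')
    fix x y assume "x \<in> idx m \<times> idx n" "y \<in> idx m \<times> idx n"
    then show "((\<lambda>(a, b). a @ b) x = (\<lambda>(a, b). a @ b) y) = (x = y)"
      by (auto simp: append_eq_append_conv length_idx)
  next
    fix x assume "x \<in> idx m \<times> idx n"
    then show "(\<lambda>(a, b). a @ b) x \<in> idx (m + n)" by (auto intro: append_in_idx)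
  next
    fix y assume "y \<in> idx (m + n)"
    then show "\<exists>x\<in>idx m \<times> idx n. y = (\<lambda>(a, b). a @ b) x"
      by (intro bexI[of _ "(take m y, drop m y)"]) (auto intro: take_in_idx drop_in_idx)
  qed
  then have "(\<Sum>xs\<in>idx (m + n). f xs) = (\<Sum>x\<in>idx m \<times> idx n. f ((\<lambda>(a, b). a @ b) x))"
    by (simp only: sum.reindex_bij_betw)
  then show ?thesis by (simp add: sum.cartesian_product split_def)
qed

lemma sum_idx_Suc:
  "(\<Sum>xs\<in>idx (Suc N). f xs) = (\<Sum>i<4. \<Sum>ys\<in>idx N. f (i # ys))"
proof -
  have "bij_betw (\<lambda>(i, ys). i # ys) ({..<4} \<times> idx N) (idx (Suc N))"
  proof (rule bij_betwI')
    fix x assume "x \<in> {..<4::nat} \<times> idx N"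
    then show "(\<lambda>(i, ys). i # ys) x \<in> idx (Suc N)" by (auto simp: idx_def)
  next
    fix y assume y: "y \<in> idx (Suc N)"
    then obtain i ys where "y = i # ys" by (cases y) (auto simp: idx_def)
    with y show "\<exists>x\<in>{..<4} \<times> idx N. y = (\<lambda>(i, ys). i # ys) x"
      by (intro bexI[of _ "(i, ys)"]) (auto simp: idx_def)
  qed auto
  then have "(\<Sum>xs\<in>idx (Suc N). f xs) = (\<Sum>x\<in>{..<4} \<times> idx N. f ((\<lambda>(i, ys). i # ys) x))"
    by (simp only: sum.reindex_bij_betw)
  then show ?thesis by (simp add: sum.cartesian_product split_def)
qed

lemma sum_idx_prod:
  fixes f :: "nat \<Rightarrow> nat \<Rightarrow> 'a :: comm_semiring_1"
  shows "(\<Sum>ys\<in>idx N. \<Prod>k<N. f k (ys ! k)) = (\<Prod>k<N. \<Sum>i<4. f k i)"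
proof (induction N arbitrary: f)
  case 0
  have "idx 0 = {[]}" by (auto simp: idx_def)
  then show ?case by simp
next
  case (Suc N)
  have "(\<Sum>ys\<in>idx (Suc N). \<Prod>k<Suc N. f k (ys ! k))
      = (\<Sum>i<4. \<Sum>ys\<in>idx N. f 0 i * (\<Prod>k<N. f (Suc k) (ys ! k)))"
    unfolding sum_idx_Suc by (simp only: prod.lessThan_Suc_shift nth_Cons_0 nth_Cons_Suc)
  also have "\<dots> = (\<Sum>i<4. f 0 i * (\<Prod>k<N. \<Sum>j<4. f (Suc k) j))"
    by (simp only: Suc.IH[of "\<lambda>k. f (Suc k)"] flip: sum_distrib_left)
  also have "\<dots> = (\<Prod>k<Suc N. \<Sum>i<4. f k i)"
    by (simp only: prod.lessThan_Suc_shift sum_distrib_right)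
  finally show ?case .
qed

lemma prod_lessThan_add:
  fixes g :: "nat \<Rightarrow> 'a :: comm_monoid_mult"
  shows "(\<Prod>k<m + n. g k) = (\<Prod>k<m. g k) * (\<Prod>k<n. g (m + k))"
  by (induction n) (simp_all add: mult_ac)

subsection \<open>The transform \<open>K\<^sup>\<otimes>\<^sup>N\<close>\<close>

definition Kmat :: "nat \<Rightarrow> nat list \<Rightarrow> nat list \<Rightarrow> real" where
  "Kmat N xs ys = (\<Prod>k<N. Kent (xs ! k) (ys ! k))"

lemma Kpow_eq_sum:
  "xs \<in> idx N \<Longrightarrow> Kpow N p xs = (\<Sum>ys\<in>idx N. Kmat N xs ys * p ys)"
  by (simp add: Kpow_def Kmat_def)

lemma Kpow_outside: "xs \<notin> idx N \<Longrightarrow> Kpow N p xs = 0"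
  by (simp add: Kpow_def)

lemma is_vec_Kpow: "is_vec N (Kpow N p)"
  by (simp add: is_vec_def Kpow_outside)

lemma Kpow_linear:
  "Kpow N (\<lambda>xs. a * f xs + b * g xs) = (\<lambda>xs. a * Kpow N f xs + b * Kpow N g xs)"
  by (rule ext) (simp add: Kpow_def sum.distrib sum_distrib_left algebra_simps)

lemma Kpow_scale: "Kpow N (\<lambda>xs. c * f xs) = (\<lambda>xs. c * Kpow N f xs)"
  by (rule ext) (simp add: Kpow_def sum_distrib_left algebra_simps)

lemma Kpow_restrict: "Kpow N (\<lambda>xs. if xs \<in> idx N then f xs else 0) = Kpow N f"
  by (rule ext) (simp add: Kpow_def)

lemma Kpow_eq_0: "(\<And>xs. xs \<in> idx N \<Longrightarrow> f xs = 0) \<Longrightarrow> Kpow N f = (\<lambda>_. 0)"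
  by (rule ext) (simp add: Kpow_def)

lemma Kmat_append:
  "length a = m \<Longrightarrow> length c = m \<Longrightarrow> Kmat (m + n) (a @ b) (c @ d) = Kmat m a c * Kmat n b d"
  by (simp add: Kmat_def prod_lessThan_add nth_append)

lemma Kpow_append_eq_sum:
  "a \<in> idx m \<Longrightarrow> b \<in> idx n \<Longrightarrow>
    Kpow (m + n) x (a @ b) = (\<Sum>c\<in>idx m. Kmat m a c * (\<Sum>d\<in>idx n. Kmat n b d * x (c @ d)))"
  by (simp add: Kpow_eq_sum append_in_idx sum_idx_add Kmat_append length_idx
      sum_distrib_left mult_ac)

lemma Kent_square:
  assumes "a < 4" "b < 4"
  shows "(\<Sum>i<4. Kent a i * Kent i b) = (if a = b then 1 else 0)"
proof -
  have "a \<in> {0, 1, 2, 3}" "b \<in> {0, 1, 2, 3}" using assms by auto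
  then show ?thesis by (auto simp: numeral_eq_Suc Kent_def)
qed

lemma Kmat_square:
  assumes xs: "xs \<in> idx N" and zs: "zs \<in> idx N"
  shows "(\<Sum>ys\<in>idx N. Kmat N xs ys * Kmat N ys zs) = (if xs = zs then 1 else 0)"
proof -
  have "(\<Sum>ys\<in>idx N. Kmat N xs ys * Kmat N ys zs)
      = (\<Prod>k<N. \<Sum>i<4. Kent (xs ! k) i * Kent i (zs ! k))"
    unfolding Kmat_def prod.distrib[symmetric] by (rule sum_idx_prod)
  also have "\<dots> = (\<Prod>k<N. if xs ! k = zs ! k then 1 else 0)"
    using xs zs by (intro prod.cong refl Kent_square) (auto simp: nth_idx_less)
  also have "\<dots> = (if xs = zs then 1 else 0)"
    using xs zs nth_equalityI[of xs zs] by (auto simp: length_idx)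
  finally show ?thesis .
qed

lemma Kpow_Kpow: "is_vec N p \<Longrightarrow> Kpow N (Kpow N p) = p"
proof (rule ext)
  fix xs assume p: "is_vec N p"
  show "Kpow N (Kpow N p) xs = p xs"
  proof (cases "xs \<in> idx N")
    case True
    have "Kpow N (Kpow N p) xs = (\<Sum>ys\<in>idx N. Kmat N xs ys * (\<Sum>zs\<in>idx N. Kmat N ys zs * p zs))"
      using True by (simp add: Kpow_eq_sum)
    also have "\<dots> = (\<Sum>zs\<in>idx N. (\<Sum>ys\<in>idx N. Kmat N xs ys * Kmat N ys zs) * p zs)"
      by (simp only: sum_distrib_left sum_distrib_right mult.assoc, rule sum.swap)
    also have "\<dots> = (\<Sum>zs\<in>idx N. if xs = zs then p zs else 0)"
      using True by (intro sum.cong refl) (simp add: Kmat_square)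
    also have "\<dots> = p xs" using True finite_idx by simp
    finally show ?thesis .
  qed (use p in \<open>simp add: Kpow_outside is_vec_def\<close>)
qed

lemma Kpow_inject: "is_vec N x \<Longrightarrow> is_vec N y \<Longrightarrow> Kpow N x = Kpow N y \<Longrightarrow> x = y"
  by (metis Kpow_Kpow)

subsection \<open>Extremal rays of the cone\<close>

lemma exists_pos_scaled_le:
  fixes f g :: "'a \<Rightarrow> real"
  assumes "finite A" and "\<forall>i\<in>A. f i \<ge> 0 \<and> (f i = 0 \<longrightarrow> g i = 0)"
  shows "\<exists>e>0. \<forall>i\<in>A. e * \<bar>g i\<bar> \<le> f i"
  using assms
proof (induction A rule: finite_induct)
  case empty
  then show ?case by (intro exI[of _ 1]) simp
next
  case (insert j A)
  then obtain e where e: "e > 0" "\<forall>i\<in>A. e * \<bar>g i\<bar> \<le> f i" by auto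
  show ?case
  proof (cases "g j = 0")
    case True
    then show ?thesis using e insert.prems by (intro exI[of _ e]) auto
  next
    case False
    then have "f j > 0" using insert.prems by force
    define e' where "e' = min e (f j / \<bar>g j\<bar>)"
    have "e' > 0" using e \<open>f j > 0\<close> False by (simp add: e'_def)
    moreover have "e' * \<bar>g j\<bar> \<le> f j"
      using False mult_right_mono[of e' "f j / \<bar>g j\<bar>" "\<bar>g j\<bar>"] by (simp add: e'_def)
    moreover have "e' * \<bar>g i\<bar> \<le> f i" if "i \<in> A" for i
      using e that mult_right_mono[of e' e "\<bar>g i\<bar>"] by (force simp: e'_def)
    ultimately show ?thesis by (intro exI[of _ e']) auto
  qed
qed

lemma S_scale: "(p, q) \<in> S N \<Longrightarrow> c \<ge> 0 \<Longrightarrow> (\<lambda>xs. c * p xs, \<lambda>xs. c * q xs) \<in> S N"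
  by (simp add: S_def is_vec_def Kpow_scale)

lemma S_perturb:
  assumes "(p, q) \<in> S N" "is_vec N x"
    and "\<forall>xs. \<bar>t * x xs\<bar> \<le> p xs" "\<forall>xs. \<bar>t * Kpow N x xs\<bar> \<le> q xs"
  shows "(\<lambda>xs. p xs + t * x xs, \<lambda>xs. q xs + t * Kpow N x xs) \<in> S N"
proof -
  have p: "is_vec N p" and q: "is_vec N q" and K: "Kpow N p = q"
    using assms(1) by (simp_all add: S_def)
  have "Kpow N (\<lambda>xs. p xs + t * x xs) = (\<lambda>xs. q xs + t * Kpow N x xs)"
    using Kpow_linear[of N 1 p t x] K by simp
  moreover have "is_vec N (\<lambda>xs. p xs + t * x xs)" using p assms(2) by (simp add: is_vec_def)
  moreover have "is_vec N (\<lambda>xs. q xs + t * Kpow N x xs)" using q by (simp add: is_vec_def Kpow_outside)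
  moreover have "0 \<le> p xs + t * x xs" "0 \<le> q xs + t * Kpow N x xs" for xs
    using spec[OF assms(3), of xs] spec[OF assms(4), of xs] by (simp_all add: abs_le_iff)
  ultimately show ?thesis unfolding S_def mem_Collect_eq case_prod_conv by blast
qed

lemma S_fst_eq_0_iff: "(p, q) \<in> S N \<Longrightarrow> p = (\<lambda>_. 0) \<longleftrightarrow> q = (\<lambda>_. 0)"
  by (auto simp: S_def Kpow_eq_0 dest: Kpow_Kpow)

lemma extremal_ray_S_nonzero:
  assumes "extremal_ray (S N) (p, q)"
  shows "p \<noteq> (\<lambda>_. 0)" "q \<noteq> (\<lambda>_. 0)"
  using assms S_fst_eq_0_iff[of p q N] by (auto simp: extremal_ray_def)

definition in_face_span :: "nat \<Rightarrow> (nat list \<Rightarrow> real) \<Rightarrow> (nat list \<Rightarrow> real) \<Rightarrow> (nat list \<Rightarrow> real) \<Rightarrow> bool"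
  where "in_face_span N p q x \<longleftrightarrow> is_vec N x \<and>
    (\<forall>xs. p xs = 0 \<longrightarrow> x xs = 0) \<and> (\<forall>xs. q xs = 0 \<longrightarrow> Kpow N x xs = 0)"

lemma in_face_span_dominated:
  assumes pq: "(p, q) \<in> S N" and x: "in_face_span N p q x"
  shows "\<exists>e>0. (\<forall>xs. \<bar>e * x xs\<bar> \<le> p xs) \<and> (\<forall>xs. \<bar>e * Kpow N x xs\<bar> \<le> q xs)"
proof -
  obtain e1 where e1: "e1 > 0" "\<forall>xs\<in>idx N. e1 * \<bar>x xs\<bar> \<le> p xs"
    using exists_pos_scaled_le[OF finite_idx[of N], of p x] pq x by (auto simp: S_def in_face_span_def)
  obtain e2 where e2: "e2 > 0" "\<forall>xs\<in>idx N. e2 * \<bar>Kpow N x xs\<bar> \<le> q xs"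
    using exists_pos_scaled_le[OF finite_idx[of N], of q "Kpow N x"] pq x
    by (auto simp: S_def in_face_span_def)
  have le: "\<bar>min e1 e2 * y\<bar> \<le> e1 * \<bar>y\<bar>" "\<bar>min e1 e2 * y\<bar> \<le> e2 * \<bar>y\<bar>" for y :: real
    using e1(1) e2(1) by (auto simp: abs_mult intro: mult_right_mono)
  show ?thesis
  proof (intro exI conjI allI)
    show "min e1 e2 > 0" using e1 e2 by simp
    fix xs
    show "\<bar>min e1 e2 * x xs\<bar> \<le> p xs"
      using le(1)[of "x xs"] e1 pq x by (cases "xs \<in> idx N") (auto simp: S_def in_face_span_def is_vec_def)
    show "\<bar>min e1 e2 * Kpow N x xs\<bar> \<le> q xs"
      using le(2)[of "Kpow N x xs"] e2 pq by (cases "xs \<in> idx N") (auto simp: S_def Kpow_outside)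
  qed
qed

lemma extremal_rayD:
  assumes "extremal_ray C (p, q)" "(y1, y2) \<in> C" "(z1, z2) \<in> C"
    and "\<And>xs. p xs = y1 xs + z1 xs" "\<And>xs. q xs = y2 xs + z2 xs"
  shows "\<exists>a\<ge>0. y1 = (\<lambda>xs. a * p xs) \<and> y2 = (\<lambda>xs. a * q xs)"
proof -
  have ext: "\<forall>y\<in>C. \<forall>z\<in>C. (fst (p, q) = (\<lambda>i. fst y i + fst z i) \<and> snd (p, q) = (\<lambda>i. snd y i + snd z i))
      \<longrightarrow> (\<exists>a\<ge>0. fst y = (\<lambda>i. a * fst (p, q) i) \<and> snd y = (\<lambda>i. a * snd (p, q) i))"
    using assms(1) unfolding extremal_ray_def by (elim conjE)
  have "p = (\<lambda>xs. y1 xs + z1 xs)" "q = (\<lambda>xs. y2 xs + z2 xs)" using assms(4,5) by auto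
  with bspec[OF bspec[OF ext assms(2)] assms(3)] show ?thesis by simp
qed

lemma extremal_ray_in_face_span:
  assumes ext: "extremal_ray (S N) (p, q)" and x: "in_face_span N p q x"
  shows "\<exists>c. x = (\<lambda>xs. c * p xs)"
proof -
  have pq: "(p, q) \<in> S N" using ext by (simp add: extremal_ray_def)
  obtain e where e: "e > 0" "\<forall>xs. \<bar>e * x xs\<bar> \<le> p xs" "\<forall>xs. \<bar>e * Kpow N x xs\<bar> \<le> q xs"
    using in_face_span_dominated[OF pq x] by blast
  have xv: "is_vec N x" using x by (simp add: in_face_span_def)
  have half: "(\<lambda>xs. 1/2 * (p xs + t * x xs), \<lambda>xs. 1/2 * (q xs + t * Kpow N x xs)) \<in> S N"
    if "\<bar>t\<bar> = e" for t
  proof -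
    have "(\<lambda>xs. p xs + t * x xs, \<lambda>xs. q xs + t * Kpow N x xs) \<in> S N"
      using S_perturb[OF pq xv] e that by (simp add: abs_mult)
    from S_scale[OF this, of "1/2"] show ?thesis by simp
  qed
  have "\<exists>a\<ge>0. (\<lambda>xs. 1/2 * (p xs + e * x xs)) = (\<lambda>xs. a * p xs)
      \<and> (\<lambda>xs. 1/2 * (q xs + e * Kpow N x xs)) = (\<lambda>xs. a * q xs)"
    using e(1) by (intro extremal_rayD[OF ext half[of e] half[of "- e"]]) (simp_all add: algebra_simps)
  then obtain a where "(\<lambda>xs. 1/2 * (p xs + e * x xs)) = (\<lambda>xs. a * p xs)" by blast
  then have "x xs = ((2 * a - 1) / e) * p xs" for xs
    using e(1) by (simp add: fun_eq_iff field_simps)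
  then show ?thesis by blast
qed

lemma extremal_ray_S_intro:
  assumes pq: "(p, q) \<in> S N" and p: "p \<noteq> (\<lambda>_. 0)"
    and face: "\<And>x. in_face_span N p q x \<Longrightarrow> \<exists>c. x = (\<lambda>xs. c * p xs)"
  shows "extremal_ray (S N) (p, q)"
  unfolding extremal_ray_def
proof (intro conjI ballI impI)
  show "(p, q) \<in> S N" by (fact pq)
  show "(p, q) \<noteq> (\<lambda>_. 0, \<lambda>_. 0)" using p by simp
  fix y z assume y: "y \<in> S N" and z: "z \<in> S N"
    and sum: "fst (p, q) = (\<lambda>i. fst y i + fst z i) \<and> snd (p, q) = (\<lambda>i. snd y i + snd z i)"
  have "in_face_span N p q (fst y)"
    using y z sum by (auto simp: in_face_span_def S_def add_nonneg_eq_0_iff)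
  then obtain c where c: "fst y = (\<lambda>xs. c * p xs)" using face by blast
  moreover have "snd y = (\<lambda>xs. c * q xs)"
    using y pq Kpow_scale[of N c p] c by (auto simp: S_def)
  moreover have "c \<ge> 0"
  proof -
    obtain xs where "p xs \<noteq> 0" using p by auto
    moreover have "p xs \<ge> 0" "fst y xs \<ge> 0" using pq y by (auto simp: S_def)
    ultimately show ?thesis using c by (simp add: zero_le_mult_iff)
  qed
  ultimately show "\<exists>a\<ge>0. fst y = (\<lambda>i. a * fst (p, q) i) \<and> snd y = (\<lambda>i. a * snd (p, q) i)"
    by auto
qed

subsection \<open>Tensor products\<close>

lemma tensor_append: "length a = m \<Longrightarrow> tensor m p1 p2 (a @ b) = p1 a * p2 b"
  by (simp add: tensor_def)

lemma is_vec_tensor: "is_vec m p1 \<Longrightarrow> is_vec n p2 \<Longrightarrow> is_vec (m + n) (tensor m p1 p2)"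
  unfolding is_vec_def tensor_def
  by (metis append_in_idx append_take_drop_id mult_zero_left mult_zero_right)

lemma Kpow_tensor:
  assumes "is_vec m p1" "is_vec n p2"
  shows "Kpow (m + n) (tensor m p1 p2) = tensor m (Kpow m p1) (Kpow n p2)"
proof (rule ext)
  fix xs
  show "Kpow (m + n) (tensor m p1 p2) xs = tensor m (Kpow m p1) (Kpow n p2) xs"
  proof (cases "xs \<in> idx (m + n)")
    case True
    then obtain a b where ab: "a \<in> idx m" "b \<in> idx n" "xs = a @ b" by (rule idx_add_cases)
    have "Kpow (m + n) (tensor m p1 p2) xs
        = (\<Sum>c\<in>idx m. Kmat m a c * (\<Sum>d\<in>idx n. Kmat n b d * (p1 c * p2 d)))"
      using ab by (simp add: Kpow_append_eq_sum tensor_append length_idx)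
    also have "\<dots> = (\<Sum>c\<in>idx m. Kmat m a c * p1 c) * (\<Sum>d\<in>idx n. Kmat n b d * p2 d)"
      unfolding sum_product by (simp add: sum_distrib_left mult_ac)
    also have "\<dots> = tensor m (Kpow m p1) (Kpow n p2) xs"
      using ab by (simp add: tensor_append length_idx Kpow_eq_sum)
    finally show ?thesis .
  next
    case False
    then show ?thesis
      using is_vec_tensor[OF is_vec_Kpow is_vec_Kpow] by (simp add: Kpow_outside is_vec_def)
  qed
qed

lemma tensor_in_S:
  assumes "(p1, q1) \<in> S m" "(p2, q2) \<in> S n"
  shows "(tensor m p1 p2, tensor m q1 q2) \<in> S (m + n)"
  using assms is_vec_tensor Kpow_tensor by (auto simp: S_def tensor_def)

lemma tensor_nonzero:
  assumes "is_vec m p1" "p1 \<noteq> (\<lambda>_. 0)" "p2 \<noteq> (\<lambda>_. 0)"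
  shows "tensor m p1 p2 \<noteq> (\<lambda>_. 0)"
proof -
  obtain a b where "p1 a \<noteq> 0" "p2 b \<noteq> 0" using assms(2,3) by (meson ext)
  moreover have "length a = m" using assms(1) \<open>p1 a \<noteq> 0\<close> length_idx by (auto simp: is_vec_def)
  ultimately show ?thesis by (metis mult_eq_0_iff tensor_append)
qed

text \<open>For a vector \<open>x\<close> on \<open>m + n\<close> factors, \<open>slice n x c\<close> fixes the first \<open>m\<close> indices to \<open>c\<close>, and
  \<open>Kslice m n x b\<close> is \<open>(I \<otimes> K\<^sup>\<otimes>\<^sup>n) x\<close> with the last \<open>n\<close> indices fixed to \<open>b\<close>.\<close>

definition slice :: "nat \<Rightarrow> (nat list \<Rightarrow> real) \<Rightarrow> nat list \<Rightarrow> nat list \<Rightarrow> real" where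
  "slice n x c = (\<lambda>d. if d \<in> idx n then x (c @ d) else 0)"

definition Kslice :: "nat \<Rightarrow> nat \<Rightarrow> (nat list \<Rightarrow> real) \<Rightarrow> nat list \<Rightarrow> nat list \<Rightarrow> real" where
  "Kslice m n x b = (\<lambda>c. if c \<in> idx m then Kpow n (slice n x c) b else 0)"

lemma is_vec_slice: "is_vec n (slice n x c)"
  by (simp add: is_vec_def slice_def)

lemma is_vec_Kslice: "is_vec m (Kslice m n x b)"
  by (simp add: is_vec_def Kslice_def)

lemma Kpow_append_eq_Kpow_Kslice:
  assumes "a \<in> idx m" "b \<in> idx n"
  shows "Kpow (m + n) x (a @ b) = Kpow m (Kslice m n x b) a"
proof -
  have "Kpow n (slice n x c) b = (\<Sum>d\<in>idx n. Kmat n b d * x (c @ d))" for c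
    using assms(2) by (simp add: Kpow_eq_sum slice_def if_distrib cong: sum.cong)
  then show ?thesis
    using assms by (simp add: Kpow_append_eq_sum Kpow_eq_sum Kslice_def cong: sum.cong)
qed

lemma Kslice_tensor:
  assumes "is_vec m p1"
  shows "Kslice m n (tensor m p1 p2) b = (\<lambda>c. p1 c * Kpow n p2 b)"
proof (rule ext)
  fix c
  have "slice n (tensor m p1 p2) c = (\<lambda>d. if d \<in> idx n then p1 c * p2 d else 0)" if "c \<in> idx m"
    using that by (auto simp: slice_def tensor_append length_idx)
  then show "Kslice m n (tensor m p1 p2) b c = p1 c * Kpow n p2 b"
    using assms by (simp add: Kslice_def Kpow_restrict Kpow_scale is_vec_def)
qed

lemma Kslice_inject:
  assumes x: "is_vec (m + n) x" and y: "is_vec (m + n) y"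
    and eq: "\<And>b. b \<in> idx n \<Longrightarrow> Kslice m n x b = Kslice m n y b"
  shows "x = y"
proof (rule ext)
  fix xs
  show "x xs = y xs"
  proof (cases "xs \<in> idx (m + n)")
    case True
    then obtain c d where cd: "c \<in> idx m" "d \<in> idx n" "xs = c @ d" by (rule idx_add_cases)
    have "Kpow n (slice n x c) b = Kpow n (slice n y c) b" for b
      using fun_cong[OF eq, of b c] cd(1) by (cases "b \<in> idx n") (simp_all add: Kslice_def Kpow_outside)
    then have "Kpow n (slice n x c) = Kpow n (slice n y c)" ..
    then have "slice n x c = slice n y c" by (rule Kpow_inject[OF is_vec_slice is_vec_slice])
    then show ?thesis using cd by (simp add: fun_eq_iff slice_def split: if_splits)
  qed (use x y in \<open>simp add: is_vec_def\<close>)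
qed

lemma in_face_span_tensorD:
  assumes x: "in_face_span (m + n) (tensor m p1 p2) (tensor m q1 q2) x"
    and ab: "a \<in> idx m" "b \<in> idx n"
  shows "p1 a = 0 \<or> p2 b = 0 \<Longrightarrow> x (a @ b) = 0"
    and "q1 a = 0 \<or> q2 b = 0 \<Longrightarrow> Kpow m (Kslice m n x b) a = 0"
  using x ab by (auto simp: in_face_span_def tensor_append length_idx
      simp flip: Kpow_append_eq_Kpow_Kslice)

lemma Kslice_in_face_span:
  assumes x: "in_face_span (m + n) (tensor m p1 p2) (tensor m q1 q2) x" and b: "b \<in> idx n"
  shows "in_face_span m p1 q1 (Kslice m n x b)"
  unfolding in_face_span_def
proof (intro conjI allI impI)
  show "is_vec m (Kslice m n x b)" by (rule is_vec_Kslice)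
  fix c assume "p1 c = 0"
  then have "Kpow n (slice n x c) = (\<lambda>_. 0)" if "c \<in> idx m"
    using in_face_span_tensorD(1)[OF x that] by (intro Kpow_eq_0) (simp add: slice_def)
  then show "Kslice m n x b c = 0" by (simp add: Kslice_def)
next
  fix a assume "q1 a = 0"
  then show "Kpow m (Kslice m n x b) a = 0"
    using in_face_span_tensorD(2)[OF x _ b] by (cases "a \<in> idx m") (auto simp: Kpow_outside)
qed

lemma slice_in_face_span:
  assumes x: "in_face_span (m + n) (tensor m p1 p2) (tensor m q1 q2) x" and c: "c \<in> idx m"
    and Kslice_0: "\<And>b. b \<in> idx n \<Longrightarrow> q2 b = 0 \<Longrightarrow> Kslice m n x b c = 0"
  shows "in_face_span n p2 q2 (slice n x c)"
  unfolding in_face_span_def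
proof (intro conjI allI impI)
  show "is_vec n (slice n x c)" by (rule is_vec_slice)
  fix b assume "p2 b = 0"
  then show "slice n x c b = 0" using in_face_span_tensorD(1)[OF x c] by (simp add: slice_def)
next
  fix b assume "q2 b = 0"
  then show "Kpow n (slice n x c) b = 0"
    using Kslice_0 c by (cases "b \<in> idx n") (auto simp: Kslice_def Kpow_outside)
qed

lemma extremal_ray_tensor_in_face_span:
  assumes e1: "extremal_ray (S m) (p1, q1)" and e2: "extremal_ray (S n) (p2, q2)"
    and x: "in_face_span (m + n) (tensor m p1 p2) (tensor m q1 q2) x"
  shows "\<exists>c. x = (\<lambda>xs. c * tensor m p1 p2 xs)"
proof -
  have S1: "(p1, q1) \<in> S m" and S2: "(p2, q2) \<in> S n" using e1 e2 by (simp_all add: extremal_ray_def)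
  then have p1: "is_vec m p1" and p2: "is_vec n p2" and q1: "is_vec m q1"
    and K1: "Kpow m p1 = q1" and K2: "Kpow n p2 = q2" by (simp_all add: S_def)
  obtain v where v: "\<And>b. b \<in> idx n \<Longrightarrow> Kslice m n x b = (\<lambda>c. v b * p1 c)"
    using extremal_ray_in_face_span[OF e1 Kslice_in_face_span[OF x]] by metis
  obtain a0 where a0: "q1 a0 \<noteq> 0" "a0 \<in> idx m"
    using extremal_ray_S_nonzero(2)[OF e1] q1 by (auto simp: is_vec_def)
  obtain c0 where c0: "p1 c0 \<noteq> 0" "c0 \<in> idx m"
    using extremal_ray_S_nonzero(1)[OF e1] p1 by (auto simp: is_vec_def)
  have Kpow_Kslice: "Kpow m (Kslice m n x b) = (\<lambda>a. v b * q1 a)" if "b \<in> idx n" for b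
    using v[OF that] Kpow_scale[of m "v b" p1] K1 by simp
  have v_0: "v b = 0" if "b \<in> idx n" "q2 b = 0" for b
    using in_face_span_tensorD(2)[OF x a0(2) that(1)] that(2) Kpow_Kslice[OF that(1)] a0(1) by simp
  have "Kslice m n x b c0 = 0" if "b \<in> idx n" "q2 b = 0" for b
    using v[OF that(1)] v_0[OF that] by simp
  then obtain d where d: "slice n x c0 = (\<lambda>b. d * p2 b)"
    using extremal_ray_in_face_span[OF e2 slice_in_face_span[OF x c0(2)]] by blast
  have v_eq: "v b = d / p1 c0 * q2 b" if "b \<in> idx n" for b
  proof -
    have "v b * p1 c0 = Kpow n (slice n x c0) b"
      using fun_cong[OF v[OF that], of c0] c0(2) by (simp add: Kslice_def)
    also have "\<dots> = d * q2 b" using d Kpow_scale[of n d p2] K2 by simp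
    finally show ?thesis using c0(1) by (simp add: field_simps)
  qed
  have scaled: "is_vec m (\<lambda>c. d / p1 c0 * p1 c)" using p1 by (simp add: is_vec_def)
  have "Kslice m n x b = Kslice m n (tensor m (\<lambda>c. d / p1 c0 * p1 c) p2) b" if "b \<in> idx n" for b
    unfolding Kslice_tensor[OF scaled] v[OF that] v_eq[OF that] K2 by (simp add: fun_eq_iff mult_ac)
  then have "x = tensor m (\<lambda>c. d / p1 c0 * p1 c) p2"
    using x by (intro Kslice_inject[OF _ is_vec_tensor[OF scaled p2]]) (simp_all add: in_face_span_def)
  then show ?thesis by (intro exI[of _ "d / p1 c0"]) (simp add: tensor_def mult.assoc)
qed

theorem mainTheorem7:
  fixes N1 N2 :: nat and p1 q1 p2 q2 :: "nat list \<Rightarrow> real"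
  assumes "extremal_ray (S N1) (p1, q1)"
      and "extremal_ray (S N2) (p2, q2)"
  shows "(tensor N1 p1 p2, tensor N1 q1 q2) \<in> S (N1 + N2)
       \<and> extremal_ray (S (N1 + N2)) (tensor N1 p1 p2, tensor N1 q1 q2)"
proof -
  have S1: "(p1, q1) \<in> S N1" and S2: "(p2, q2) \<in> S N2"
    using assms by (simp_all add: extremal_ray_def)
  have mem: "(tensor N1 p1 p2, tensor N1 q1 q2) \<in> S (N1 + N2)"
    by (rule tensor_in_S[OF S1 S2])
  have nonzero: "tensor N1 p1 p2 \<noteq> (\<lambda>_. 0)"
    using S1 extremal_ray_S_nonzero(1)[OF assms(1)] extremal_ray_S_nonzero(1)[OF assms(2)]
    by (intro tensor_nonzero) (simp_all add: S_def)
  have "extremal_ray (S (N1 + N2)) (tensor N1 p1 p2, tensor N1 q1 q2)"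
    by (rule extremal_ray_S_intro[OF mem nonzero extremal_ray_tensor_in_face_span[OF assms]])
  with mem show ?thesis ..
qed

end
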